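(* Let $m\ge 2$ be even and $n$ a multiple of $m/2$. If $S\subseteq\{0,1\}^n$ is a set of mutually incomparable solutions with respect to $m$-LOTZ, then $|S|\le(2n/m+1)^{m-1}$.
   Context: $m$-LOTZ: $\{0,1\}^n\to\mathbb N_0^m$ is defined by splitting $x$ into $m/2$ consecutive blocks of length $2n/m$; for block $k\in[m/2]$ (bits $x_{(k-1)2n/m+1},\dots,x_{k\cdot 2n/m}$), $f_{2k-1}(x)$ is the number of leading ones of the block (length of its longest all-ones prefix) and $f_{2k}(x)$ is the number of trailing zeros of the block (length of its longest all-zeros suffix). All objectives are maximized. $x\succeq y$ iff $f_j(x)\ge f_j(y)$ for all $j$; $x,y$ are incomparable if neither $x\succeq y$ nor $y\succeq x$; $S$ is a set of mutually incomparable solutions if any two distinct elements of $S$ are incomparable. *)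

theory Defs
  imports Main
begin

text \<open>Bit strings of length n are represented as bool lists of length n
  (True = 1). Blocks and objectives are 0-indexed: block k (k < m div 2)
  consists of positions k*b ..< (k+1)*b with b = 2n/m; objective j < m is
  the leading-ones count of block (j div 2) if j is even (paper: f_{2k-1})
  and the trailing-zeros count of block (j div 2) if j is odd (paper: f_{2k}).\<close>

definition blk_len :: "nat \<Rightarrow> nat \<Rightarrow> nat" where
  "blk_len m n = 2 * n div m"

definition block :: "nat \<Rightarrow> nat \<Rightarrow> bool list \<Rightarrow> nat \<Rightarrow> bool list" where
  "block m n x k = take (blk_len m n) (drop (k * blk_len m n) x)"

definition leading_ones :: "bool list \<Rightarrow> nat" where
  "leading_ones xs = length (takeWhile id xs)"

definition trailing_zeros :: "bool list \<Rightarrow> nat" where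
  "trailing_zeros xs = length (takeWhile Not (rev xs))"

definition mLOTZ :: "nat \<Rightarrow> nat \<Rightarrow> bool list \<Rightarrow> nat \<Rightarrow> nat" where
  "mLOTZ m n x j =
     (if even j then leading_ones (block m n x (j div 2))
      else trailing_zeros (block m n x (j div 2)))"

definition weakly_dominates :: "nat \<Rightarrow> nat \<Rightarrow> bool list \<Rightarrow> bool list \<Rightarrow> bool" where
  "weakly_dominates m n x y = (\<forall>j<m. mLOTZ m n x j \<ge> mLOTZ m n y j)"

definition incomparable :: "nat \<Rightarrow> nat \<Rightarrow> bool list \<Rightarrow> bool list \<Rightarrow> bool" where
  "incomparable m n x y = (\<not> weakly_dominates m n x y \<and> \<not> weakly_dominates m n y x)"

definition mutually_incomparable :: "nat \<Rightarrow> nat \<Rightarrow> bool list set \<Rightarrow> bool" where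
  "mutually_incomparable m n S = (\<forall>x\<in>S. \<forall>y\<in>S. x \<noteq> y \<longrightarrow> incomparable m n x y)"

end

theory Submission
  imports Defs
begin

text \<open>Two incomparable points cannot agree on all but one objective, since the remaining
  objective would then decide a dominance. Hence projecting onto the first m - 1 objectives
  is injective on a set of mutually incomparable solutions, and each objective of m-LOTZ
  takes one of the 2n/m + 1 values 0, ..., 2n/m.\<close>

lemma comparable_if_agree_except_last:
  fixes f g :: "nat \<Rightarrow> 'a::linorder"
  assumes "\<forall>j<m - 1. f j = g j"
  shows "(\<forall>j<m. g j \<le> f j) \<or> (\<forall>j<m. f j \<le> g j)"
proof -
  have agree_or_last: "f j = g j \<or> j = m - 1" if "j < m" for j
  proof (cases "j < m - 1")
    case True
    with assms show ?thesis by blast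
  next
    case False
    with that show ?thesis by linarith
  qed
  show ?thesis
  proof (cases "g (m - 1) \<le> f (m - 1)")
    case True
    have "g j \<le> f j" if "j < m" for j
      using agree_or_last[OF that] True by auto
    then show ?thesis by blast
  next
    case False
    have "f j \<le> g j" if "j < m" for j
      using agree_or_last[OF that] False by auto
    then show ?thesis by blast
  qed
qed

lemma card_pairwise_incomparable_le:
  fixes f :: "'a \<Rightarrow> nat \<Rightarrow> nat"
  assumes bounded: "\<forall>x\<in>S. \<forall>j<m. f x j \<le> B"
    and incomparable: "\<forall>x\<in>S. \<forall>y\<in>S. x \<noteq> y \<longrightarrow> \<not> (\<forall>j<m. f y j \<le> f x j)"
  shows "card S \<le> (B + 1) ^ (m - 1)"
proof -
  define proj where "proj x = map (f x) [0..<m - 1]" for x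
  define T where "T = {xs. set xs \<subseteq> {0..B} \<and> length xs = m - 1}"
  have "inj_on proj S"
  proof (rule inj_onI, rule ccontr)
    fix x y assume "x \<in> S" "y \<in> S" "proj x = proj y" "x \<noteq> y"
    have "f x j = f y j" if "j < m - 1" for j
      using arg_cong[OF \<open>proj x = proj y\<close>, of "\<lambda>xs. xs ! j"] that
      by (simp add: proj_def)
    then have "\<forall>j<m - 1. f x j = f y j" by blast
    then have "(\<forall>j<m. f y j \<le> f x j) \<or> (\<forall>j<m. f x j \<le> f y j)"
      by (rule comparable_if_agree_except_last)
    moreover have "\<not> (\<forall>j<m. f y j \<le> f x j)" "\<not> (\<forall>j<m. f x j \<le> f y j)"
      using incomparable \<open>x \<in> S\<close> \<open>y \<in> S\<close> \<open>x \<noteq> y\<close> by metis+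
    ultimately show False by blast
  qed
  then have "card S = card (proj ` S)" by (simp add: card_image)
  also have "\<dots> \<le> card T"
  proof (rule card_mono)
    show "finite T" unfolding T_def by (rule finite_lists_length_eq) simp
    show "proj ` S \<subseteq> T" unfolding T_def proj_def using bounded by auto
  qed
  also have "card T = (B + 1) ^ (m - 1)"
    unfolding T_def by (subst card_lists_length_eq) auto
  finally show ?thesis .
qed

lemma leading_ones_le_length: "leading_ones xs \<le> length xs"
  unfolding leading_ones_def by (rule length_takeWhile_le)

lemma trailing_zeros_le_length: "trailing_zeros xs \<le> length xs"
  unfolding trailing_zeros_def by (metis length_takeWhile_le length_rev)

lemma mLOTZ_le_blk_len: "mLOTZ m n x j \<le> blk_len m n"
proof -
  have "length (block m n x k) \<le> blk_len m n" for k
    by (simp add: block_def)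
  then show ?thesis
    unfolding mLOTZ_def
    using leading_ones_le_length trailing_zeros_le_length by (auto intro: le_trans)
qed

theorem lemma5:
  fixes m n :: nat and S :: "bool list set"
  assumes "even m" and "m \<ge> 2" and "(m div 2) dvd n"
    and "S \<subseteq> {x. length x = n}"
    and "mutually_incomparable m n S"
  shows "card S \<le> (2 * n div m + 1) ^ (m - 1)"
proof -
  have "card S \<le> (blk_len m n + 1) ^ (m - 1)"
  proof (rule card_pairwise_incomparable_le)
    show "\<forall>x\<in>S. \<forall>j<m. mLOTZ m n x j \<le> blk_len m n"
      using mLOTZ_le_blk_len by blast
    show "\<forall>x\<in>S. \<forall>y\<in>S. x \<noteq> y \<longrightarrow> \<not> (\<forall>j<m. mLOTZ m n y j \<le> mLOTZ m n x j)"
      using assms(5)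
      unfolding mutually_incomparable_def incomparable_def weakly_dominates_def by blast
  qed
  then show ?thesis by (simp add: blk_len_def)
qed

end
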